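(* Let $T$ be a spherically homogeneous rooted tree, $G\le\mathrm{Aut}~T$ a branch group, and $H\le G$ a subgroup with finitely many conjugates in $G$. Then $\mathrm{Supp}(H)$ is a clopen subset of $\partial T$.
   Context: A spherically homogeneous rooted tree is a rooted tree in which all vertices at the same distance from the root have the same degree; $\mathcal{L}_n$ is the set of vertices at distance $n$ from the root. $\partial T$ is the set of infinite paths from the root, topologized by the cone sets $C_v$ (paths through $v$). For $H\le\mathrm{Aut}~T$, $\mathrm{Supp}(H)=\{\gamma\in\partial T\mid \gamma^h\ne\gamma \text{ for some } h\in H\}$. For $G\le\mathrm{Aut}~T$, $\mathrm{rist}_G(v)$ is the set of elements of $G$ fixing $v$ whose support lies in $C_v$, and $\mathrm{Rist}_G(n)=\prod_{v\in\mathcal{L}_n}\mathrm{rist}_G(v)$. $G$ is a branch group if it acts transitively on every level $\mathcal{L}_n$ and $\mathrm{Rist}_G(n)$ has finite index in $G$ for all $n\ge1$. *)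

theory Defs
  imports "HOL-Analysis.Abstract_Topology" "HOL-Algebra.Generated_Groups" "HOL-Algebra.Coset"
begin

text \<open>A spherically homogeneous rooted tree T is given by its branching sequence m
  (every vertex at level n has m n children, m n \<ge> 2).\<close>

definition level :: "(nat \<Rightarrow> nat) \<Rightarrow> nat \<Rightarrow> nat list set" where
  "level m n = {xs. length xs = n \<and> (\<forall>i<n. xs ! i < m i)}"

definition verts :: "(nat \<Rightarrow> nat) \<Rightarrow> nat list set" where
  "verts m = (\<Union>n. level m n)"

definition is_aut :: "(nat \<Rightarrow> nat) \<Rightarrow> (nat list \<Rightarrow> nat list) \<Rightarrow> bool" where
  "is_aut m g \<longleftrightarrow> bij_betw g (verts m) (verts m)
     \<and> (\<forall>xs\<in>verts m. length (g xs) = length xs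
                       \<and> (\<forall>k\<le>length xs. g (take k xs) = take k (g xs)))
     \<and> (\<forall>xs. xs \<notin> verts m \<longrightarrow> g xs = xs)"

definition aut_group :: "(nat \<Rightarrow> nat) \<Rightarrow> (nat list \<Rightarrow> nat list) monoid" where
  "aut_group m = \<lparr>carrier = {g. is_aut m g}, mult = (\<circ>), one = id\<rparr>"

definition bdry :: "(nat \<Rightarrow> nat) \<Rightarrow> (nat \<Rightarrow> nat) set" where
  "bdry m = {\<gamma>. \<forall>i. \<gamma> i < m i}"

definition pref :: "(nat \<Rightarrow> nat) \<Rightarrow> nat \<Rightarrow> nat list" where
  "pref \<gamma> n = map \<gamma> [0..<n]"

definition bd_act :: "(nat list \<Rightarrow> nat list) \<Rightarrow> (nat \<Rightarrow> nat) \<Rightarrow> (nat \<Rightarrow> nat)" where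
  "bd_act g \<gamma> = (\<lambda>i. g (pref \<gamma> (Suc i)) ! i)"

definition cone :: "(nat \<Rightarrow> nat) \<Rightarrow> nat list \<Rightarrow> (nat \<Rightarrow> nat) set" where
  "cone m v = {\<gamma> \<in> bdry m. pref \<gamma> (length v) = v}"

definition bdry_open :: "(nat \<Rightarrow> nat) \<Rightarrow> (nat \<Rightarrow> nat) set \<Rightarrow> bool" where
  "bdry_open m S \<longleftrightarrow> S \<subseteq> bdry m \<and> (\<forall>\<gamma>\<in>S. \<exists>v\<in>verts m. \<gamma> \<in> cone m v \<and> cone m v \<subseteq> S)"

definition bdry_top :: "(nat \<Rightarrow> nat) \<Rightarrow> (nat \<Rightarrow> nat) topology" where
  "bdry_top m = topology (bdry_open m)"


lemma pref_take: "k \<le> n \<Longrightarrow> take k (pref \<gamma> n) = pref \<gamma> k"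
  unfolding pref_def by (simp add: take_map)

lemma pref_in_verts: "\<gamma> \<in> bdry m \<Longrightarrow> pref \<gamma> n \<in> verts m"
  unfolding pref_def verts_def level_def bdry_def by auto

lemma cone_mono:
  assumes "\<gamma> \<in> cone m u" "length u \<le> n"
  shows "cone m (pref \<gamma> n) \<subseteq> cone m u"
proof
  fix \<delta> assume d: "\<delta> \<in> cone m (pref \<gamma> n)"
  then have "pref \<delta> n = pref \<gamma> n" by (simp add: cone_def pref_def)
  then have "take (length u) (pref \<delta> n) = take (length u) (pref \<gamma> n)" by simp
  then have "pref \<delta> (length u) = u" using assms by (simp add: pref_take cone_def)
  then show "\<delta> \<in> cone m u" using d by (simp add: cone_def)
qed

lemma self_in_cone: "\<gamma> \<in> bdry m \<Longrightarrow> \<gamma> \<in> cone m (pref \<gamma> n)"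
  unfolding cone_def pref_def by simp

lemma istopology_bdry_open: "istopology (bdry_open m)"
  unfolding istopology_def
proof (intro conjI allI impI)
  fix S T assume S: "bdry_open m S" and T: "bdry_open m T"
  show "bdry_open m (S \<inter> T)"
    unfolding bdry_open_def
  proof (intro conjI ballI)
    show "S \<inter> T \<subseteq> bdry m" using S by (auto simp: bdry_open_def)
    fix \<gamma> assume g: "\<gamma> \<in> S \<inter> T"
    then obtain u v where u: "\<gamma> \<in> cone m u" "cone m u \<subseteq> S" and v: "\<gamma> \<in> cone m v" "cone m v \<subseteq> T"
    proof -
      have "\<gamma> \<in> S" "\<gamma> \<in> T" using g by auto
      then have "\<exists>u\<in>verts m. \<gamma> \<in> cone m u \<and> cone m u \<subseteq> S" "\<exists>v\<in>verts m. \<gamma> \<in> cone m v \<and> cone m v \<subseteq> T"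
        using S T unfolding bdry_open_def by blast+
      then show ?thesis using that by blast
    qed
    have gb: "\<gamma> \<in> bdry m" using u by (simp add: cone_def)
    define n where "n = max (length u) (length v)"
    have c1: "cone m (pref \<gamma> n) \<subseteq> cone m u" by (rule cone_mono[OF u(1)]) (simp add: n_def)
    have c2: "cone m (pref \<gamma> n) \<subseteq> cone m v" by (rule cone_mono[OF v(1)]) (simp add: n_def)
    have "cone m (pref \<gamma> n) \<subseteq> S \<inter> T" using c1 c2 u(2) v(2) by blast
    moreover have "pref \<gamma> n \<in> verts m" by (rule pref_in_verts[OF gb])
    moreover have "\<gamma> \<in> cone m (pref \<gamma> n)" by (rule self_in_cone[OF gb])
    ultimately show "\<exists>w\<in>verts m. \<gamma> \<in> cone m w \<and> cone m w \<subseteq> S \<inter> T" by blast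
  qed
next
  fix K assume K: "\<forall>S\<in>K. bdry_open m S"
  show "bdry_open m (\<Union>K)" unfolding bdry_open_def
  proof (intro conjI ballI)
    show "\<Union>K \<subseteq> bdry m" using K unfolding bdry_open_def by blast
    fix \<gamma> assume "\<gamma> \<in> \<Union>K"
    then obtain S where S: "S \<in> K" "\<gamma> \<in> S" by blast
    then obtain v where "v \<in> verts m" "\<gamma> \<in> cone m v" "cone m v \<subseteq> S"
      using K unfolding bdry_open_def by blast
    then show "\<exists>v\<in>verts m. \<gamma> \<in> cone m v \<and> cone m v \<subseteq> \<Union>K" using S(1) by blast
  qed
qed

lemma openin_bdry_top: "openin (bdry_top m) S \<longleftrightarrow> bdry_open m S"
  unfolding bdry_top_def by (simp add: istopology_bdry_open)

definition Supp :: "(nat \<Rightarrow> nat) \<Rightarrow> (nat list \<Rightarrow> nat list) set \<Rightarrow> (nat \<Rightarrow> nat) set" where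
  "Supp m H = {\<gamma> \<in> bdry m. \<exists>h\<in>H. bd_act h \<gamma> \<noteq> \<gamma>}"

definition rist :: "(nat \<Rightarrow> nat) \<Rightarrow> (nat list \<Rightarrow> nat list) set \<Rightarrow> nat list \<Rightarrow> (nat list \<Rightarrow> nat list) set" where
  "rist m G v = {g \<in> G. g v = v \<and> Supp m {g} \<subseteq> cone m v}"

text \<open>Rist_G(n): the (internal) product of the rigid stabilisers of the level-n vertices,
  i.e. the subgroup they generate.\<close>

definition Rist :: "(nat \<Rightarrow> nat) \<Rightarrow> (nat list \<Rightarrow> nat list) set \<Rightarrow> nat \<Rightarrow> (nat list \<Rightarrow> nat list) set" where
  "Rist m G n = generate (aut_group m) (\<Union>v\<in>level m n. rist m G v)"

definition branch_group :: "(nat \<Rightarrow> nat) \<Rightarrow> (nat list \<Rightarrow> nat list) set \<Rightarrow> bool" where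
  "branch_group m G \<longleftrightarrow> subgroup G (aut_group m)
     \<and> (\<forall>n. \<forall>u\<in>level m n. \<forall>v\<in>level m n. \<exists>g\<in>G. g u = v)
     \<and> (\<forall>n\<ge>1. finite ((\<lambda>g. Rist m G n #>\<^bsub>aut_group m\<^esub> g) ` G))"

end

theory Submission
  imports Defs
begin

text \<open>
  The support of any set of automorphisms is open: an automorphism moving a path \<gamma> already
  moves its prefix of some length k, and then moves every path through that prefix.

  For closedness let \<gamma> lie in the closure of Supp(H). The conjugates of H by elements of G
  fixing the vertex \<gamma>|n form a decreasing sequence of finite sets, hence are the same for all
  n \<ge> N. Choose \<delta> \<in> Supp(H) through \<gamma>|N and L \<ge> N with cone(\<delta>|L) \<subseteq> Supp(H).
  Level transitivity gives g \<in> G with g(\<delta>|L) = \<gamma>|L; as g fixes \<gamma>|N, the conjugates of H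
  by g and by some g' fixing \<gamma>|L coincide. Then a = g'\<inverse> g normalises H, so Supp(H) is
  a-invariant, and a maps cone(\<delta>|L) \<subseteq> Supp(H) onto cone(\<gamma>|L), which contains \<gamma>.

  Of the branch property only level transitivity is used; neither the finite index of the
  rigid level stabilisers nor m n \<ge> 2 is needed.
\<close>

lemma length_pref [simp]: "length (pref \<gamma> n) = n"
  unfolding pref_def by simp

lemma nth_pref: "i < n \<Longrightarrow> pref \<gamma> n ! i = \<gamma> i"
  unfolding pref_def by simp

lemma pref_in_level: "\<gamma> \<in> bdry m \<Longrightarrow> pref \<gamma> n \<in> level m n"
  unfolding pref_def level_def bdry_def by auto

lemma verts_nth_less: "xs \<in> verts m \<Longrightarrow> i < length xs \<Longrightarrow> xs ! i < m i"
  unfolding verts_def level_def by auto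

lemma is_aut_length: "is_aut m g \<Longrightarrow> xs \<in> verts m \<Longrightarrow> length (g xs) = length xs"
  unfolding is_aut_def by blast

lemma is_aut_take:
  "is_aut m g \<Longrightarrow> xs \<in> verts m \<Longrightarrow> k \<le> length xs \<Longrightarrow> g (take k xs) = take k (g xs)"
  unfolding is_aut_def by blast

lemma is_aut_verts: "is_aut m g \<Longrightarrow> xs \<in> verts m \<Longrightarrow> g xs \<in> verts m"
  unfolding is_aut_def bij_betw_def by blast

lemma is_aut_id: "is_aut m id"
  unfolding is_aut_def by (simp add: bij_betw_id)

lemma is_aut_comp:
  assumes g: "is_aut m g" and h: "is_aut m h"
  shows "is_aut m (g \<circ> h)"
  unfolding is_aut_def
proof (intro conjI ballI allI impI)
  show "bij_betw (g \<circ> h) (verts m) (verts m)"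
    using g h unfolding is_aut_def by (blast intro: bij_betw_trans)
  fix xs assume xs: "xs \<in> verts m"
  have hxs: "h xs \<in> verts m" using h xs by (rule is_aut_verts)
  show "length ((g \<circ> h) xs) = length xs"
    using is_aut_length[OF g hxs] is_aut_length[OF h xs] by simp
  fix k assume "k \<le> length xs"
  then show "(g \<circ> h) (take k xs) = take k ((g \<circ> h) xs)"
    using is_aut_take[OF h xs] is_aut_take[OF g hxs] is_aut_length[OF h xs] by simp
next
  fix xs assume "xs \<notin> verts m"
  then show "(g \<circ> h) xs = xs" using g h unfolding is_aut_def by simp
qed

lemma is_aut_inverse:
  assumes g: "is_aut m g"
  obtains g' where "is_aut m g'" "g' \<circ> g = id"
proof
  define g' where "g' xs = (if xs \<in> verts m then inv_into (verts m) g xs else xs)" for xs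
  have bij: "bij_betw g (verts m) (verts m)" using g unfolding is_aut_def by blast
  have g'_verts: "g' xs \<in> verts m" and g_g': "g (g' xs) = xs" if "xs \<in> verts m" for xs
    using that bij by (auto simp: g'_def bij_betw_def inv_into_into f_inv_into_f)
  show g'_g: "g' \<circ> g = id"
  proof
    fix xs show "(g' \<circ> g) xs = id xs"
    proof (cases "xs \<in> verts m")
      case True
      then show ?thesis using bij by (auto simp: g'_def bij_betw_def inv_into_f_f)
    next
      case False
      then show ?thesis using g unfolding g'_def is_aut_def by simp
    qed
  qed
  show "is_aut m g'"
    unfolding is_aut_def
  proof (intro conjI ballI allI impI)
    have "bij_betw (inv_into (verts m) g) (verts m) (verts m)"
      using bij by (rule bij_betw_inv_into)
    then show "bij_betw g' (verts m) (verts m)"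
      by (rule bij_betw_cong[THEN iffD1, rotated]) (simp add: g'_def)
    fix xs assume xs: "xs \<in> verts m"
    define ys where "ys = g' xs"
    have ys: "ys \<in> verts m" "g ys = xs" using g'_verts[OF xs] g_g'[OF xs] by (auto simp: ys_def)
    then show "length (g' xs) = length xs" using is_aut_length[OF g ys(1)] by (simp add: ys_def)
    fix k assume "k \<le> length xs"
    then have "g (take k ys) = take k xs"
      using is_aut_take[OF g ys(1), of k] is_aut_length[OF g ys(1)] ys(2) by simp
    then have "g' (take k xs) = (g' \<circ> g) (take k ys)" by simp
    then show "g' (take k xs) = take k (g' xs)" by (simp add: g'_g ys_def)
  next
    fix xs assume "xs \<notin> verts m" then show "g' xs = xs" by (simp add: g'_def)
  qed
qed

lemma carrier_aut_group: "carrier (aut_group m) = {g. is_aut m g}"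
  and mult_aut_group: "g \<otimes>\<^bsub>aut_group m\<^esub> h = g \<circ> h"
  and one_aut_group: "\<one>\<^bsub>aut_group m\<^esub> = id"
  unfolding aut_group_def by simp_all

lemma group_aut_group: "group (aut_group m)"
proof (rule groupI)
  fix g assume "g \<in> carrier (aut_group m)"
  then obtain g' where "is_aut m g'" "g' \<circ> g = id"
    using is_aut_inverse by (auto simp: carrier_aut_group)
  then show "\<exists>g'\<in>carrier (aut_group m). g' \<otimes>\<^bsub>aut_group m\<^esub> g = \<one>\<^bsub>aut_group m\<^esub>"
    by (auto simp: carrier_aut_group mult_aut_group one_aut_group)
qed (auto simp: carrier_aut_group mult_aut_group one_aut_group is_aut_id is_aut_comp comp_assoc)

interpretation aut_group: group "aut_group m" for m
  by (rule group_aut_group)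

lemma aut_group_inv_comp:
  assumes "g \<in> carrier (aut_group m)"
  shows "inv\<^bsub>aut_group m\<^esub> g \<circ> g = id" and "g \<circ> inv\<^bsub>aut_group m\<^esub> g = id"
  using aut_group.l_inv[OF assms] aut_group.r_inv[OF assms] by (simp_all add: mult_aut_group one_aut_group)

lemma pref_bd_act:
  assumes g: "is_aut m g" and \<gamma>: "\<gamma> \<in> bdry m"
  shows "pref (bd_act g \<gamma>) n = g (pref \<gamma> n)"
proof -
  have v: "pref \<gamma> n \<in> verts m" using \<gamma> by (rule pref_in_verts)
  have len: "length (g (pref \<gamma> n)) = n" using is_aut_length[OF g v] by simp
  show ?thesis
  proof (rule nth_equalityI)
    fix i assume "i < length (pref (bd_act g \<gamma>) n)"
    then have i: "i < n" by simp
    have "g (pref \<gamma> (Suc i)) = take (Suc i) (g (pref \<gamma> n))"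
      using is_aut_take[OF g v, of "Suc i"] i by (simp add: pref_take)
    then show "pref (bd_act g \<gamma>) n ! i = g (pref \<gamma> n) ! i"
      using i by (simp add: nth_pref bd_act_def)
  qed (simp add: len)
qed

lemma bd_act_bdry:
  assumes g: "is_aut m g" and \<gamma>: "\<gamma> \<in> bdry m"
  shows "bd_act g \<gamma> \<in> bdry m"
proof -
  have "bd_act g \<gamma> i < m i" for i
  proof -
    have v: "pref \<gamma> (Suc i) \<in> verts m" using \<gamma> by (rule pref_in_verts)
    have "g (pref \<gamma> (Suc i)) \<in> verts m" "length (g (pref \<gamma> (Suc i))) = Suc i"
      using is_aut_verts[OF g v] is_aut_length[OF g v] by simp_all
    then show ?thesis unfolding bd_act_def by (simp add: verts_nth_less)
  qed
  then show ?thesis by (simp add: bdry_def)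
qed

lemma bd_act_comp:
  "is_aut m h \<Longrightarrow> \<gamma> \<in> bdry m \<Longrightarrow> bd_act (g \<circ> h) \<gamma> = bd_act g (bd_act h \<gamma>)"
  unfolding bd_act_def[of "g \<circ> h"] bd_act_def[of g] by (simp add: pref_bd_act)

lemma bd_act_id: "bd_act id \<gamma> = \<gamma>"
  unfolding bd_act_def by (simp add: nth_pref)

lemma bd_act_inv_cancel:
  assumes g: "g \<in> carrier (aut_group m)" and \<gamma>: "\<gamma> \<in> bdry m"
  shows "bd_act (inv\<^bsub>aut_group m\<^esub> g) (bd_act g \<gamma>) = \<gamma>"
    and "bd_act g (bd_act (inv\<^bsub>aut_group m\<^esub> g) \<gamma>) = \<gamma>"
proof -
  have "is_aut m g" "is_aut m (inv\<^bsub>aut_group m\<^esub> g)"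
    using g aut_group.inv_closed[OF g] by (simp_all add: carrier_aut_group)
  then show "bd_act (inv\<^bsub>aut_group m\<^esub> g) (bd_act g \<gamma>) = \<gamma>"
    and "bd_act g (bd_act (inv\<^bsub>aut_group m\<^esub> g) \<gamma>) = \<gamma>"
    using \<gamma> by (simp_all flip: bd_act_comp add: aut_group_inv_comp[OF g] bd_act_id)
qed

lemma is_aut_pref_take:
  assumes "is_aut m g" "\<gamma> \<in> bdry m" "g (pref \<gamma> L) = pref \<delta> L" "k \<le> L"
  shows "g (pref \<gamma> k) = pref \<delta> k"
  using is_aut_take[OF assms(1) pref_in_verts[OF assms(2)], of k] assms(3,4)
  by (simp add: pref_take)

lemma bd_act_inv_mem_cone:
  assumes g: "g \<in> carrier (aut_group m)" and v: "v \<in> verts m" and \<gamma>: "\<gamma> \<in> cone m (g v)"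
  shows "bd_act (inv\<^bsub>aut_group m\<^esub> g) \<gamma> \<in> cone m v"
proof -
  have inv_aut: "is_aut m (inv\<^bsub>aut_group m\<^esub> g)"
    using aut_group.inv_closed[OF g] by (simp add: carrier_aut_group)
  have "\<gamma> \<in> bdry m" "pref \<gamma> (length v) = g v"
    using \<gamma> is_aut_length[of m g v] g v by (auto simp: cone_def carrier_aut_group)
  moreover have "(inv\<^bsub>aut_group m\<^esub> g) (g v) = v"
    using fun_cong[OF aut_group_inv_comp(1)[OF g]] by simp
  ultimately show ?thesis
    using bd_act_bdry[OF inv_aut] pref_bd_act[OF inv_aut] by (simp add: cone_def)
qed

definition conjugate :: "('a, 'b) monoid_scheme \<Rightarrow> 'a \<Rightarrow> 'a set \<Rightarrow> 'a set" where
  "conjugate G g H = (\<lambda>h. g \<otimes>\<^bsub>G\<^esub> h \<otimes>\<^bsub>G\<^esub> inv\<^bsub>G\<^esub> g) ` H"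

lemma (in group) conjugate_mult:
  assumes "a \<in> carrier G" "b \<in> carrier G" "H \<subseteq> carrier G"
  shows "conjugate G (a \<otimes> b) H = conjugate G a (conjugate G b H)"
  unfolding conjugate_def image_image
  using assms by (intro image_cong) (auto simp: inv_mult_group m_assoc)

lemma (in group) conjugate_one: "H \<subseteq> carrier G \<Longrightarrow> conjugate G \<one> H = H"
  unfolding conjugate_def by (auto simp: subsetD intro: image_eqI)

lemma (in group) conjugate_eq_imp_normalises:
  assumes g: "g \<in> carrier G" and g': "g' \<in> carrier G" and H: "H \<subseteq> carrier G"
    and eq: "conjugate G g H = conjugate G g' H"
  shows "conjugate G (inv g' \<otimes> g) H = H"
proof -
  have "conjugate G (inv g' \<otimes> g) H = conjugate G (inv g') (conjugate G g' H)"
    using conjugate_mult[OF inv_closed[OF g'] g H] eq by simp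
  also have "\<dots> = conjugate G \<one> H"
    using conjugate_mult[OF inv_closed[OF g'] g' H] g' by simp
  finally show ?thesis using conjugate_one[OF H] by simp
qed

lemma cone_subset_Supp:
  assumes "\<gamma> \<in> Supp m H"
  obtains k where "\<And>n. k \<le> n \<Longrightarrow> cone m (pref \<gamma> n) \<subseteq> Supp m H"
proof -
  obtain h where \<gamma>: "\<gamma> \<in> bdry m" and h: "h \<in> H" and "bd_act h \<gamma> \<noteq> \<gamma>"
    using assms by (auto simp: Supp_def)
  then obtain i where i: "bd_act h \<gamma> i \<noteq> \<gamma> i" by auto
  have "cone m (pref \<gamma> (Suc i)) \<subseteq> Supp m H"
  proof
    fix \<delta> assume "\<delta> \<in> cone m (pref \<gamma> (Suc i))"
    then have \<delta>: "\<delta> \<in> bdry m" "pref \<delta> (Suc i) = pref \<gamma> (Suc i)" by (auto simp: cone_def)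
    then have "bd_act h \<delta> i = bd_act h \<gamma> i" "\<delta> i = \<gamma> i"
      using nth_pref[of i "Suc i" \<delta>] nth_pref[of i "Suc i" \<gamma>] by (simp_all add: bd_act_def)
    then have "bd_act h \<delta> \<noteq> \<delta>" using i by force
    then show "\<delta> \<in> Supp m H" using \<delta>(1) h by (auto simp: Supp_def)
  qed
  then show ?thesis
    using that cone_mono[OF self_in_cone[OF \<gamma>]] by (metis length_pref order_trans)
qed

lemma openin_Supp: "openin (bdry_top m) (Supp m H)"
  unfolding openin_bdry_top bdry_open_def
proof (intro conjI ballI)
  fix \<gamma> assume \<gamma>: "\<gamma> \<in> Supp m H"
  then have "\<gamma> \<in> bdry m" by (simp add: Supp_def)
  with \<gamma> show "\<exists>v\<in>verts m. \<gamma> \<in> cone m v \<and> cone m v \<subseteq> Supp m H"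
    using pref_in_verts self_in_cone by (metis cone_subset_Supp order_refl)
qed (auto simp: Supp_def)

lemma bd_act_mem_Supp_conjugate:
  assumes g: "g \<in> carrier (aut_group m)" and H: "H \<subseteq> carrier (aut_group m)"
    and \<delta>: "\<delta> \<in> Supp m H"
  shows "bd_act g \<delta> \<in> Supp m (conjugate (aut_group m) g H)"
proof -
  obtain h where h: "h \<in> H" and \<delta>_bdry: "\<delta> \<in> bdry m" and moved: "bd_act h \<delta> \<noteq> \<delta>"
    using \<delta> by (auto simp: Supp_def)
  have auts: "is_aut m g" "is_aut m h" "is_aut m (inv\<^bsub>aut_group m\<^esub> g)"
    using g h H aut_group.inv_closed[OF g] by (auto simp: carrier_aut_group)
  have g\<delta>: "bd_act g \<delta> \<in> bdry m" using bd_act_bdry[OF auts(1) \<delta>_bdry] .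
  have "bd_act (g \<otimes>\<^bsub>aut_group m\<^esub> h \<otimes>\<^bsub>aut_group m\<^esub> inv\<^bsub>aut_group m\<^esub> g) (bd_act g \<delta>)
      = bd_act g (bd_act h \<delta>)"
    using auts \<delta>_bdry g\<delta> bd_act_inv_cancel(1)[OF g \<delta>_bdry]
    by (simp add: mult_aut_group bd_act_comp is_aut_comp bd_act_bdry)
  moreover have "bd_act g (bd_act h \<delta>) \<noteq> bd_act g \<delta>"
    using moved bd_act_inv_cancel(1)[OF g] bd_act_bdry[OF auts(2) \<delta>_bdry] \<delta>_bdry by metis
  ultimately show ?thesis
    using h g\<delta> by (auto simp: Supp_def conjugate_def)
qed

lemma topspace_bdry_top: "topspace (bdry_top m) = bdry m"
proof -
  have "cone m [] = bdry m" by (simp add: cone_def pref_def)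
  moreover have "[] \<in> verts m" by (simp add: verts_def level_def)
  ultimately have "bdry_open m (bdry m)" by (auto simp: bdry_open_def)
  then show ?thesis by (auto simp: topspace_def openin_bdry_top bdry_open_def)
qed

lemma closedin_bdry_top_iff:
  "closedin (bdry_top m) S \<longleftrightarrow>
     S \<subseteq> bdry m \<and> (\<forall>\<gamma>\<in>bdry m. (\<forall>n. cone m (pref \<gamma> n) \<inter> S \<noteq> {}) \<longrightarrow> \<gamma> \<in> S)"
proof -
  have cone_avoids: "(\<exists>v\<in>verts m. \<gamma> \<in> cone m v \<and> cone m v \<subseteq> bdry m - S)
      \<longleftrightarrow> (\<exists>n. cone m (pref \<gamma> n) \<inter> S = {})" if \<gamma>: "\<gamma> \<in> bdry m" for \<gamma>
  proof
    assume "\<exists>v\<in>verts m. \<gamma> \<in> cone m v \<and> cone m v \<subseteq> bdry m - S"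
    then obtain v where v: "\<gamma> \<in> cone m v" "cone m v \<subseteq> bdry m - S" by blast
    then have v_pref: "pref \<gamma> (length v) = v" by (simp add: cone_def)
    have "cone m (pref \<gamma> (length v)) \<inter> S = {}" unfolding v_pref using v(2) by blast
    then show "\<exists>n. cone m (pref \<gamma> n) \<inter> S = {}" ..
  next
    assume "\<exists>n. cone m (pref \<gamma> n) \<inter> S = {}"
    then obtain n where "cone m (pref \<gamma> n) \<inter> S = {}" ..
    moreover have "cone m (pref \<gamma> n) \<subseteq> bdry m" by (auto simp: cone_def)
    ultimately show "\<exists>v\<in>verts m. \<gamma> \<in> cone m v \<and> cone m v \<subseteq> bdry m - S"
      using pref_in_verts[OF \<gamma>] self_in_cone[OF \<gamma>] by blast
  qed
  have "bdry_open m (bdry m - S) \<longleftrightarrow> (\<forall>\<gamma>\<in>bdry m - S. \<exists>n. cone m (pref \<gamma> n) \<inter> S = {})"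
    unfolding bdry_open_def using cone_avoids by simp
  then show ?thesis
    unfolding closedin_def topspace_bdry_top openin_bdry_top by blast
qed

lemma decseq_finite_stabilises:
  fixes A :: "nat \<Rightarrow> 'a set"
  assumes dec: "decseq A" and fin: "finite (A 0)"
  obtains N where "\<And>n. N \<le> n \<Longrightarrow> A n = A N"
proof
  define N where "N = (ARG_MIN (\<lambda>n. card (A n)) n. True)"
  fix n assume "N \<le> n"
  with dec have sub: "A n \<subseteq> A N" by (rule decseqD)
  have fin_N: "finite (A N)" using decseqD[OF dec, of 0 N] fin by (auto intro: finite_subset)
  have "card (A N) \<le> card (A n)" unfolding N_def by (rule arg_min_nat_le) simp
  then have "card (A n) = card (A N)" using card_mono[OF fin_N sub] by simp
  then show "A n = A N" using card_subset_eq[OF fin_N sub] by simp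
qed

lemma stabiliser_conjugates_eventually_constant:
  assumes G: "G \<subseteq> carrier (aut_group m)"
    and fin: "finite {conjugate (aut_group m) g H | g. g \<in> G}"
    and \<gamma>: "\<gamma> \<in> bdry m"
  obtains N where "\<And>L g. N \<le> L \<Longrightarrow> g \<in> G \<Longrightarrow> g (pref \<gamma> N) = pref \<gamma> N \<Longrightarrow>
    \<exists>g'\<in>G. g' (pref \<gamma> L) = pref \<gamma> L \<and> conjugate (aut_group m) g' H = conjugate (aut_group m) g H"
proof -
  define C where "C n = {conjugate (aut_group m) g H | g. g \<in> G \<and> g (pref \<gamma> n) = pref \<gamma> n}" for n
  have dec: "decseq C"
    unfolding decseq_def
  proof (intro allI impI subsetI)
    fix k L X assume "k \<le> L" "X \<in> C L"
    then obtain g where g: "g \<in> G" "g (pref \<gamma> L) = pref \<gamma> L" "X = conjugate (aut_group m) g H"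
      unfolding C_def by blast
    then have "g (pref \<gamma> k) = pref \<gamma> k"
      using is_aut_pref_take[of m g \<gamma> L \<gamma> k] G \<gamma> \<open>k \<le> L\<close> by (auto simp: carrier_aut_group)
    then show "X \<in> C k" using g unfolding C_def by blast
  qed
  have "finite (C 0)"
    using fin by (rule rev_finite_subset) (auto simp: C_def)
  with dec obtain N where N: "\<And>n. N \<le> n \<Longrightarrow> C n = C N"
    using decseq_finite_stabilises by blast
  show ?thesis
  proof (rule that)
    fix L g assume "N \<le> L" "g \<in> G" "g (pref \<gamma> N) = pref \<gamma> N"
    then have "conjugate (aut_group m) g H \<in> C L" using N unfolding C_def by blast
    then show "\<exists>g'\<in>G. g' (pref \<gamma> L) = pref \<gamma> L \<and>
        conjugate (aut_group m) g' H = conjugate (aut_group m) g H"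
      unfolding C_def by blast
  qed
qed

lemma mem_Supp_if_cones_meet_Supp:
  assumes G: "G \<subseteq> carrier (aut_group m)"
    and transitive: "\<And>n u v. u \<in> level m n \<Longrightarrow> v \<in> level m n \<Longrightarrow> \<exists>g\<in>G. g u = v"
    and HG: "H \<subseteq> G"
    and fin: "finite {conjugate (aut_group m) g H | g. g \<in> G}"
    and \<gamma>: "\<gamma> \<in> bdry m"
    and meets: "\<And>n. cone m (pref \<gamma> n) \<inter> Supp m H \<noteq> {}"
  shows "\<gamma> \<in> Supp m H"
proof -
  have H: "H \<subseteq> carrier (aut_group m)" using G HG by blast
  obtain N where N: "\<And>L g. N \<le> L \<Longrightarrow> g \<in> G \<Longrightarrow> g (pref \<gamma> N) = pref \<gamma> N \<Longrightarrow>
      \<exists>g'\<in>G. g' (pref \<gamma> L) = pref \<gamma> L \<and> conjugate (aut_group m) g' H = conjugate (aut_group m) g H"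
    using stabiliser_conjugates_eventually_constant[OF G fin \<gamma>] by blast
  obtain \<delta> where \<delta>: "\<delta> \<in> Supp m H" "\<delta> \<in> bdry m" "pref \<delta> N = pref \<gamma> N"
    using meets[of N] by (auto simp: cone_def)
  obtain k where k: "\<And>n. k \<le> n \<Longrightarrow> cone m (pref \<delta> n) \<subseteq> Supp m H"
    using cone_subset_Supp[OF \<delta>(1)] by blast
  define L where "L = max N k"
  obtain g where g: "g \<in> G" "g (pref \<delta> L) = pref \<gamma> L"
    using transitive pref_in_level[OF \<delta>(2)] pref_in_level[OF \<gamma>] by blast
  have "g (pref \<delta> N) = pref \<gamma> N"
    using is_aut_pref_take[of m g \<delta> L \<gamma> N] g G \<delta>(2) by (auto simp: L_def carrier_aut_group)
  then obtain g' where g': "g' \<in> G" "g' (pref \<gamma> L) = pref \<gamma> L"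
      "conjugate (aut_group m) g' H = conjugate (aut_group m) g H"
    using N[of L g] g(1) \<delta>(3) by (auto simp: L_def)
  define a where "a = inv\<^bsub>aut_group m\<^esub> g' \<otimes>\<^bsub>aut_group m\<^esub> g"
  have a: "a \<in> carrier (aut_group m)" using g(1) g'(1) G by (auto simp: a_def)
  have normalises: "conjugate (aut_group m) a H = H"
    unfolding a_def using g(1) g'(1) G H g'(3)
    by (intro aut_group.conjugate_eq_imp_normalises) auto
  have "a (pref \<delta> L) = pref \<gamma> L"
    using g(2) fun_cong[OF aut_group_inv_comp(1), of g' m "pref \<gamma> L"] g'(1,2) G
    by (auto simp: a_def mult_aut_group)
  then have "bd_act (inv\<^bsub>aut_group m\<^esub> a) \<gamma> \<in> cone m (pref \<delta> L)"
    using bd_act_inv_mem_cone[OF a pref_in_verts[OF \<delta>(2)]] \<gamma> self_in_cone by metis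
  then have "bd_act (inv\<^bsub>aut_group m\<^esub> a) \<gamma> \<in> Supp m H" using k[of L] by (auto simp: L_def)
  then show ?thesis
    using bd_act_mem_Supp_conjugate[OF a H] normalises bd_act_inv_cancel(2)[OF a \<gamma>] by metis
qed

theorem proposition4p3:
  fixes m :: "nat \<Rightarrow> nat"
    and G H :: "(nat list \<Rightarrow> nat list) set"
  assumes "\<And>n. m n \<ge> 2"
    and "branch_group m G"
    and "subgroup H (aut_group m)" and "H \<subseteq> G"
    and "finite {(\<lambda>h. g \<otimes>\<^bsub>aut_group m\<^esub> h \<otimes>\<^bsub>aut_group m\<^esub> inv\<^bsub>aut_group m\<^esub> g) ` H | g. g \<in> G}"
  shows "openin (bdry_top m) (Supp m H) \<and> closedin (bdry_top m) (Supp m H)"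
proof -
  have G: "G \<subseteq> carrier (aut_group m)"
    using assms(2) by (auto simp: branch_group_def dest: subgroup.subset)
  have transitive: "\<And>n u v. u \<in> level m n \<Longrightarrow> v \<in> level m n \<Longrightarrow> \<exists>g\<in>G. g u = v"
    using assms(2) by (auto simp: branch_group_def)
  have fin: "finite {conjugate (aut_group m) g H | g. g \<in> G}"
    using assms(5) by (simp add: conjugate_def)
  have "closedin (bdry_top m) (Supp m H)"
    unfolding closedin_bdry_top_iff
    using mem_Supp_if_cones_meet_Supp[OF G transitive assms(4) fin] by (auto simp: Supp_def)
  with openin_Supp show ?thesis by blast
qed

end
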